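(* Let $p$ be a prime and let $\Phi_p$ be the set of all $\operatorname{fpt}(R,f)$, where $R$ ranges over $F$-pure rings of characteristic $p$ and $f$ over non-zero non-units of $R$. Then for every $\lambda\in\Phi_p$ and every integer $e\ge1$, we have $\langle\lambda\rangle_e\cdot\frac{p^e}{p^e-1}\le\lambda$.
   Context: A ring $R$ of characteristic $p$ is $F$-pure if $R\subseteq R^{1/p}$ splits as a map of $R$-modules. Roots and splitting. $R^{1/p^e}$ is the ring of formal $p^e$-th roots of elements of $R$, containing $R$ via $r\mapsto (r^{p^e})^{1/p^e}$. We write $f^{a/p^e}:=(f^a)^{1/p^e}$. The inclusion $R\cdot t\subseteq R^{1/p^e}$ splits if some $R$-linear $\theta:R^{1/p^e}\to R$ has $\theta(t)=1$. $F$-pure threshold. $(R,f^\lambda)$ is $F$-pure if $R\cdot f^{\lfloor (p^e-1)\lambda\rfloor/p^e}\subseteq R^{1/p^e}$ splits for all $e\ge1$. $\operatorname{fpt}(R,f)$ is the supremum of all $\lambda\ge0$ with $(R,f^\lambda)$ $F$-pure; it lies in $[0,1]$. Truncations. For $\alpha\in(0,1]$ with non-terminating base $p$ expansion $\alpha=\sum_{e\ge1}a_e/p^e$ (digits $0\le a_e\le p-1$, not all eventually zero), $\langle\alpha\rangle_e:=\sum_{i=1}^e a_i/p^i$. By convention $\langle0\rangle_e=0$. *)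

theory Defs
  imports Complex_Main "HOL-Computational_Algebra.Primes"
begin

text \<open>R-linear maps R^{1/p^e} -> R. The ring of formal p^e-th roots R^{1/p^e} is a
  copy of R (s^{1/p^e} corresponds to s); r in R acts on it by r . s^{1/p^e} = (r^{p^e} s)^{1/p^e}.\<close>
definition root_linear :: "nat \<Rightarrow> nat \<Rightarrow> ('a::comm_ring_1 \<Rightarrow> 'a) \<Rightarrow> bool" where
  "root_linear p e th \<longleftrightarrow>
     (\<forall>x y. th (x + y) = th x + th y) \<and> (\<forall>r s. th (r ^ (p ^ e) * s) = r * th s)"

text \<open>R . t^{1/p^e} \<subseteq> R^{1/p^e} splits (t given as element of R, representing t^{1/p^e}).\<close>
definition root_splits :: "nat \<Rightarrow> nat \<Rightarrow> 'a::comm_ring_1 \<Rightarrow> bool" where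
  "root_splits p e t \<longleftrightarrow> (\<exists>th. root_linear p e th \<and> th t = 1)"

definition F_pure_ring :: "nat \<Rightarrow> 'a::comm_ring_1 itself \<Rightarrow> bool" where
  "F_pure_ring p R \<longleftrightarrow> root_splits p 1 (1::'a)"

definition F_pure_pair :: "nat \<Rightarrow> 'a::comm_ring_1 \<Rightarrow> real \<Rightarrow> bool" where
  "F_pure_pair p f lam \<longleftrightarrow>
     (\<forall>e\<ge>1. root_splits p e (f ^ nat \<lfloor>(real p ^ e - 1) * lam\<rfloor>))"

definition fpt :: "nat \<Rightarrow> 'a::comm_ring_1 \<Rightarrow> real" where
  "fpt p f = Sup {lam. lam \<ge> 0 \<and> F_pure_pair p f lam}"

text \<open>Non-terminating base-p expansion alpha = sum_{i>=1} a_i / p^i (a 0 = 0 unused).\<close>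
definition nonterm_expansion :: "nat \<Rightarrow> real \<Rightarrow> (nat \<Rightarrow> nat) \<Rightarrow> bool" where
  "nonterm_expansion p alpha a \<longleftrightarrow>
     a 0 = 0 \<and> (\<forall>i. a i \<le> p - 1) \<and> (\<forall>N. \<exists>i>N. a i \<noteq> 0) \<and>
     (\<lambda>i. real (a (Suc i)) / real p ^ Suc i) sums alpha"

definition trunc :: "nat \<Rightarrow> real \<Rightarrow> nat \<Rightarrow> real" where
  "trunc p alpha e =
     (if alpha = 0 then 0
      else (let a = (THE a. nonterm_expansion p alpha a)
            in \<Sum>i=1..e. real (a i) / real p ^ i))"

end

theory Submission
  imports Defs
begin

text \<open>Let \<open>\<lambda> = fpt(R, f)\<close>, \<open>q = p^e\<close> and \<open>C = q \<langle>\<lambda>\<rangle>_e\<close>, the largest integer with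
  \<open>C / q < \<lambda>\<close>. Some \<open>\<mu> > C / q\<close> makes \<open>(R, f^\<mu>)\<close> F-pure, and a Frobenius descent shows that
  \<open>R f^(C/q) \<subseteq> R^(1/q)\<close> splits. Composing this splitting with its Frobenius twists splits
  \<open>f^(C (1 + q + ... + q^(k-1)) / q^k)\<close> for every \<open>k\<close>; these exponents increase to \<open>C / (q - 1)\<close>,
  so \<open>(R, f^(C/(q-1)))\<close> is F-pure and \<open>\<langle>\<lambda>\<rangle>_e q / (q - 1) = C / (q - 1) \<le> \<lambda>\<close>.\<close>

section \<open>Splitting maps\<close>

lemma root_linear_id: "root_linear p 0 (id :: 'a::comm_ring_1 \<Rightarrow> 'a)"
  by (simp add: root_linear_def)

lemma root_linear_comp:
  fixes th1 th2 :: "'a::comm_ring_1 \<Rightarrow> 'a"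
  assumes "root_linear p d th1" and "root_linear p e th2"
  shows "root_linear p (d + e) (th2 \<circ> th1)"
proof -
  have "r ^ p ^ (d + e) = (r ^ p ^ e) ^ p ^ d" for r :: 'a
    by (simp add: power_add mult.commute flip: power_mult)
  then show ?thesis
    using assms by (simp add: root_linear_def)
qed

lemma root_linear_mult_left:
  fixes th :: "'a::comm_ring_1 \<Rightarrow> 'a"
  assumes "root_linear p e th"
  shows "root_linear p e (\<lambda>x. th (g * x))"
  using assms unfolding root_linear_def by (metis distrib_left mult.left_commute)

lemma root_linear_frobenius:
  fixes th :: "'a::comm_ring_1 \<Rightarrow> 'a"
  assumes "prime p" and "CHAR('a) = p" and "root_linear p (e + d) th"
  shows "root_linear p e (\<lambda>s. th (s ^ p ^ d * g))"
  unfolding root_linear_def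
proof (intro conjI allI)
  fix x y :: 'a
  have "(x + y) ^ p ^ d = x ^ p ^ d + y ^ p ^ d"
    by (rule freshmans_dream') (use assms in auto)
  then show "th ((x + y) ^ p ^ d * g) = th (x ^ p ^ d * g) + th (y ^ p ^ d * g)"
    using assms(3) by (simp add: root_linear_def distrib_right)
next
  fix r s :: 'a
  have "(r ^ p ^ e * s) ^ p ^ d * g = r ^ p ^ (e + d) * (s ^ p ^ d * g)"
    by (simp add: power_mult_distrib power_add mult.assoc flip: power_mult)
  then show "th ((r ^ p ^ e * s) ^ p ^ d * g) = r * th (s ^ p ^ d * g)"
    using assms(3) by (simp add: root_linear_def)
qed

lemma F_pure_ring_root_splits_one:
  assumes "F_pure_ring p TYPE('a::comm_ring_1)"
  shows "root_splits p e (1::'a)"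
proof (induction e)
  case 0
  show ?case
    unfolding root_splits_def using root_linear_id by force
next
  case (Suc e)
  obtain th where "root_linear p e th" "th (1::'a) = 1"
    using Suc unfolding root_splits_def by blast
  moreover obtain t1 where "root_linear p 1 t1" "t1 (1::'a) = 1"
    using assms unfolding F_pure_ring_def root_splits_def by blast
  ultimately show ?case
    unfolding root_splits_def using root_linear_comp[of p 1 t1 e th] by auto
qed

lemma root_splits_power_mono:
  fixes f :: "'a::comm_ring_1"
  assumes "root_splits p e (f ^ N)" and "M \<le> N"
  shows "root_splits p e (f ^ M)"
proof -
  obtain th where th: "root_linear p e th" "th (f ^ N) = 1"
    using assms(1) unfolding root_splits_def by blast
  have "f ^ N = f ^ (N - M) * f ^ M"
    using assms(2) by (simp flip: power_add)
  then show ?thesis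
    unfolding root_splits_def using root_linear_mult_left[OF th(1)] th(2) by metis
qed

lemma root_splits_power_frobenius:
  fixes f :: "'a::comm_ring_1"
  assumes "prime p" and "CHAR('a) = p"
    and "root_splits p (e + d) (f ^ N)" and "M * p ^ d \<le> N"
  shows "root_splits p e (f ^ M)"
proof -
  obtain th where th: "root_linear p (e + d) th" "th (f ^ N) = 1"
    using assms(3) unfolding root_splits_def by blast
  have "(f ^ M) ^ p ^ d * f ^ (N - M * p ^ d) = f ^ N"
    using assms(4) by (simp flip: power_add power_mult)
  then show ?thesis
    unfolding root_splits_def using root_linear_frobenius[OF assms(1,2) th(1)] th(2) by metis
qed

lemma root_splits_power_add:
  fixes f :: "'a::comm_ring_1"
  assumes "root_splits p e (f ^ a)" and "root_splits p E (f ^ A)"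
  shows "root_splits p (e + E) (f ^ (A * p ^ e + a))"
proof -
  obtain th where th: "root_linear p e th" "th (f ^ a) = 1"
    using assms(1) unfolding root_splits_def by blast
  obtain ph where ph: "root_linear p E ph" "ph (f ^ A) = 1"
    using assms(2) unfolding root_splits_def by blast
  have "th (f ^ (A * p ^ e + a)) = f ^ A"
    using th unfolding root_linear_def by (simp add: power_add power_mult)
  then show ?thesis
    unfolding root_splits_def using root_linear_comp[OF th(1) ph(1)] ph(2) by auto
qed

lemma not_root_splits_power:
  fixes f :: "'a::comm_ring_1"
  assumes "\<not> f dvd 1" and "p ^ e \<le> N"
  shows "\<not> root_splits p e (f ^ N)"
proof
  assume "root_splits p e (f ^ N)"
  then obtain th where th: "root_linear p e th" "th (f ^ N) = 1"
    unfolding root_splits_def by blast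
  have "f ^ N = f ^ p ^ e * f ^ (N - p ^ e)"
    using assms(2) by (simp flip: power_add)
  then have "1 = f * th (f ^ (N - p ^ e))"
    using th unfolding root_linear_def by simp
  then show False
    using assms(1) by (metis dvdI)
qed

lemma root_splits_power_geometric:
  fixes f :: "'a::comm_ring_1"
  assumes "F_pure_ring p TYPE('a)" and "root_splits p e (f ^ C)"
  shows "root_splits p (k * e) (f ^ (C * (\<Sum>i<k. (p ^ e) ^ i)))"
proof (induction k)
  case 0
  show ?case using F_pure_ring_root_splits_one[OF assms(1)] by simp
next
  case (Suc k)
  have "(\<Sum>i<Suc k. (p ^ e) ^ i) = (\<Sum>i<k. (p ^ e) ^ i) * p ^ e + 1"
    by (simp only: sum.lessThan_Suc_shift power_Suc2 sum_distrib_right) simp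
  then have "C * (\<Sum>i<Suc k. (p ^ e) ^ i) = C * (\<Sum>i<k. (p ^ e) ^ i) * p ^ e + C"
    by (simp add: algebra_simps)
  then show ?case
    using root_splits_power_add[OF assms(2) Suc] by (simp add: add.commute)
qed

section \<open>Base-\<open>p\<close> expansions\<close>

lemma ceiling_mult_of_nat_bounds:
  fixes x :: real
  assumes "n > 0"
  shows "int n * \<lceil>x\<rceil> - int n < \<lceil>real n * x\<rceil>" and "\<lceil>real n * x\<rceil> \<le> int n * \<lceil>x\<rceil>"
proof -
  have "real n * (of_int \<lceil>x\<rceil> - 1) < real n * x"
    using assms by (intro mult_strict_left_mono) linarith+
  then have "real_of_int (int n * \<lceil>x\<rceil> - int n) < of_int \<lceil>real n * x\<rceil>"
    by (simp add: algebra_simps) linarith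
  then show "int n * \<lceil>x\<rceil> - int n < \<lceil>real n * x\<rceil>"
    by (simp only: of_int_less_iff)
  have "real n * x \<le> real n * of_int \<lceil>x\<rceil>"
    by (intro mult_left_mono) simp_all
  then show "\<lceil>real n * x\<rceil> \<le> int n * \<lceil>x\<rceil>"
    by (simp add: ceiling_le_iff)
qed

lemma sum_digits_shift:
  "(\<Sum>i<n. real (a (Suc i)) / real p ^ Suc i) = (\<Sum>i=1..n. real (a i) / real p ^ i)"
  by (induction n) (simp_all add: atLeastAtMostSuc_conv)

lemma sum_digits_mult_power_eq_of_nat:
  assumes "p > 0"
  shows "(\<Sum>i=1..n. real (a i) / real p ^ i) * real p ^ n = real (\<Sum>i=1..n. a i * p ^ (n - i))"
proof -
  have "real (a i) / real p ^ i * real p ^ n = real (a i * p ^ (n - i))" if "i \<in> {1..n}" for i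
  proof -
    have "real p ^ n = real p ^ i * real p ^ (n - i)"
      using that by (simp flip: power_add)
    then show ?thesis
      using assms by simp
  qed
  then show ?thesis
    by (simp add: sum_distrib_right)
qed

lemma nonterm_expansion_tail_bounds:
  assumes p: "p \<ge> 2" and ex: "nonterm_expansion p \<alpha> a"
  shows "(\<Sum>i=1..n. real (a i) / real p ^ i) < \<alpha>"
    and "\<alpha> \<le> (\<Sum>i=1..n. real (a i) / real p ^ i) + 1 / real p ^ n"
proof -
  define g where "g i = real (a (Suc i)) / real p ^ Suc i" for i
  define S where "S = (\<Sum>i=1..n. real (a i) / real p ^ i)"
  have tail: "(\<lambda>i. g (i + n)) sums (\<alpha> - S)"
    using sums_split_initial_segment[of g \<alpha> n] ex sum_digits_shift[of a p n]
    unfolding nonterm_expansion_def g_def S_def by simp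
  obtain i where i: "i > n" "a i \<noteq> 0"
    using ex unfolding nonterm_expansion_def by blast
  then have "0 < g (i - Suc n + n)"
    unfolding g_def using p by (simp add: Suc_diff_Suc)
  moreover have "0 \<le> g j" for j
    unfolding g_def by simp
  ultimately have "0 < \<alpha> - S"
    using suminf_pos2[OF sums_summable[OF tail]] sums_unique[OF tail] by simp
  then show "S < \<alpha>"
    by simp
  define h where "h i = (real p - 1) / real p ^ Suc n * (1 / real p) ^ i" for i
  have "h sums ((real p - 1) / real p ^ Suc n * (1 / (1 - 1 / real p)))"
    unfolding h_def using p by (intro sums_mult geometric_sums) simp
  moreover have "(real p - 1) / real p ^ Suc n * (1 / (1 - 1 / real p)) = 1 / real p ^ n"
    using p by (simp add: field_simps)
  ultimately have h: "h sums (1 / real p ^ n)"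
    by simp
  have "g (i + n) \<le> h i" for i
  proof -
    have "a (Suc (i + n)) \<le> p - 1"
      using ex unfolding nonterm_expansion_def by blast
    then have "real (a (Suc (i + n))) \<le> real p - 1"
      using p by linarith
    then have "g (i + n) \<le> (real p - 1) / real p ^ Suc (i + n)"
      unfolding g_def by (intro divide_right_mono) simp_all
    also have "\<dots> = h i"
      unfolding h_def using p by (simp add: power_add field_simps)
    finally show ?thesis .
  qed
  then have "\<alpha> - S \<le> 1 / real p ^ n"
    using sums_le[OF _ tail h] by blast
  then show "\<alpha> \<le> S + 1 / real p ^ n"
    by simp
qed

text \<open>That is, the \<open>n\<close>-th truncation is the largest multiple of \<open>p^-n\<close> strictly below \<open>\<alpha>\<close>.\<close>
lemma nonterm_expansion_partial_sum:
  assumes p: "p \<ge> 2" and ex: "nonterm_expansion p \<alpha> a"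
  shows "(\<Sum>i=1..n. real (a i) / real p ^ i) = of_int (\<lceil>\<alpha> * real p ^ n\<rceil> - 1) / real p ^ n"
proof -
  define S where "S = (\<Sum>i=1..n. real (a i) / real p ^ i)"
  have "p > 0"
    using p by simp
  then have "S * real p ^ n = real (\<Sum>i=1..n. a i * p ^ (n - i))"
    unfolding S_def by (rule sum_digits_mult_power_eq_of_nat)
  then obtain N where N: "S * real p ^ n = real N"
    by blast
  have pp: "real p ^ n > 0"
    using p by simp
  have "S * real p ^ n < \<alpha> * real p ^ n"
    using nonterm_expansion_tail_bounds(1)[OF p ex, of n] pp unfolding S_def
    by (rule mult_strict_right_mono)
  moreover have "\<alpha> * real p ^ n \<le> S * real p ^ n + 1"
    using nonterm_expansion_tail_bounds(2)[OF p ex, of n] pp unfolding S_def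
    by (simp add: field_simps)
  ultimately have "\<lceil>\<alpha> * real p ^ n\<rceil> = int N + 1"
    unfolding N by (subst ceiling_eq_iff) simp
  then show ?thesis
    using N pp unfolding S_def by (simp add: field_simps)
qed

lemma nonterm_expansion_unique:
  assumes "p \<ge> 2" and "nonterm_expansion p \<alpha> a" and "nonterm_expansion p \<alpha> b"
  shows "a = b"
proof
  fix i
  show "a i = b i"
  proof (cases i)
    case 0
    then show ?thesis
      using assms unfolding nonterm_expansion_def by simp
  next
    case (Suc n)
    have step: "(\<Sum>i=1..Suc n. real (x i) / real p ^ i)
        = (\<Sum>i=1..n. real (x i) / real p ^ i) + real (x (Suc n)) / real p ^ Suc n"
      for x :: "nat \<Rightarrow> nat"
      by simp
    have "real (a (Suc n)) / real p ^ Suc n = real (b (Suc n)) / real p ^ Suc n"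
      using step[of a] step[of b] nonterm_expansion_partial_sum[OF assms(1,2), of n]
        nonterm_expansion_partial_sum[OF assms(1,3), of n]
        nonterm_expansion_partial_sum[OF assms(1,2), of "Suc n"]
        nonterm_expansion_partial_sum[OF assms(1,3), of "Suc n"] by linarith
    then show ?thesis
      using Suc assms(1) by simp
  qed
qed

lemma tendsto_ceiling_power_approx:
  assumes p: "p \<ge> 2"
  shows "(\<lambda>n. of_int (\<lceil>\<alpha> * real p ^ n\<rceil> - 1) / real p ^ n) \<longlonglongrightarrow> \<alpha>"
proof -
  have "(\<lambda>n. (1 / real p) ^ n) \<longlonglongrightarrow> 0"
    using p by (intro LIMSEQ_power_zero) simp
  then have "(\<lambda>n. \<alpha> - (1 / real p) ^ n) \<longlonglongrightarrow> \<alpha>"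
    using tendsto_diff[OF tendsto_const, of _ 0 sequentially \<alpha>] by simp
  then show ?thesis
  proof (rule tendsto_sandwich[OF _ _ _ tendsto_const, rotated 2])
    show "\<forall>\<^sub>F n in sequentially.
        \<alpha> - (1 / real p) ^ n \<le> of_int (\<lceil>\<alpha> * real p ^ n\<rceil> - 1) / real p ^ n"
      using p by (intro always_eventually allI) (simp add: field_simps power_divide)
    show "\<forall>\<^sub>F n in sequentially. of_int (\<lceil>\<alpha> * real p ^ n\<rceil> - 1) / real p ^ n \<le> \<alpha>"
      using p by (intro always_eventually allI) (simp add: field_simps, linarith)
  qed
qed

text \<open>The digits are read off the approximations \<open>c_i / p^i\<close> with \<open>c_i = \<lceil>\<alpha> p^i\<rceil> - 1\<close>;
  these stay strictly below \<open>\<alpha>\<close>, which makes the expansion non-terminating.\<close>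
lemma nonterm_expansion_exists:
  assumes p: "p \<ge> 2" and "0 < \<alpha>" and "\<alpha> \<le> 1"
  shows "\<exists>a. nonterm_expansion p \<alpha> a"
proof -
  define c where "c i = \<lceil>\<alpha> * real p ^ i\<rceil> - 1" for i
  have c_below: "of_int (c i) / real p ^ i < \<alpha>" for i
    unfolding c_def using p by (simp add: field_simps) linarith
  have c_Suc: "int p * c i \<le> c (Suc i)" "c (Suc i) \<le> int p * c i + int p - 1" for i
    using ceiling_mult_of_nat_bounds[of p "\<alpha> * real p ^ i"] p
    unfolding c_def by (simp_all add: algebra_simps)
  define a where "a i = (if i = 0 then 0 else nat (c i - int p * c (i - 1)))" for i
  define g where "g = (\<lambda>i. real (a (Suc i)) / real p ^ Suc i)"
  have partial: "sum g {..<n} = of_int (c n) / real p ^ n" for n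
  proof (induction n)
    case 0
    show ?case
      unfolding c_def using assms by (simp add: ceiling_eq_iff)
  next
    case (Suc n)
    have "real (a (Suc n)) = of_int (c (Suc n)) - real p * of_int (c n)"
      unfolding a_def using c_Suc(1)[of n] by simp
    then show ?case
      using Suc p unfolding g_def by (simp add: field_simps)
  qed
  have "(\<lambda>n. of_int (c n) / real p ^ n) \<longlonglongrightarrow> \<alpha>"
    unfolding c_def by (rule tendsto_ceiling_power_approx[OF p])
  then have sums: "g sums \<alpha>"
    unfolding sums_def partial .
  have digits: "a i \<le> p - 1" for i
  proof (cases i)
    case (Suc j)
    have "c (Suc j) - int p * c j \<le> int (p - 1)"
      using c_Suc(2)[of j] p by (simp add: of_nat_diff)
    then show ?thesis
      unfolding a_def Suc by (simp add: nat_le_iff)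
  qed (simp add: a_def)
  have nonterm: "\<exists>i>N. a i \<noteq> 0" for N
  proof (rule ccontr)
    assume "\<not> (\<exists>i>N. a i \<noteq> 0)"
    then have "(\<lambda>i. g (i + N)) = (\<lambda>_. 0)"
      unfolding g_def by auto
    then have "(\<lambda>_. 0) sums (\<alpha> - sum g {..<N})"
      using sums_split_initial_segment[OF sums, of N] by simp
    then have "\<alpha> = sum g {..<N}"
      using sums_unique2[OF _ sums_zero] by fastforce
    then show False
      using c_below[of N] partial[of N] by simp
  qed
  have "a 0 = 0"
    by (simp add: a_def)
  then have "nonterm_expansion p \<alpha> a"
    unfolding nonterm_expansion_def using digits nonterm sums unfolding g_def by blast
  then show ?thesis by blast
qed

lemma trunc_eq_ceiling:
  assumes "p \<ge> 2" and "0 < \<alpha>" and "\<alpha> \<le> 1"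
  shows "trunc p \<alpha> e = of_int (\<lceil>\<alpha> * real p ^ e\<rceil> - 1) / real p ^ e"
proof -
  obtain a where a: "nonterm_expansion p \<alpha> a"
    using nonterm_expansion_exists[OF assms] by blast
  then have "(THE a. nonterm_expansion p \<alpha> a) = a"
    using nonterm_expansion_unique[OF assms(1)] by blast
  then show ?thesis
    unfolding trunc_def using assms(2) nonterm_expansion_partial_sum[OF assms(1) a] by simp
qed

section \<open>F-pure thresholds\<close>

lemma two_le_real_power:
  assumes "p \<ge> 2" and "1 \<le> e"
  shows "2 \<le> real p ^ e"
proof -
  have "real p ^ 1 \<le> real p ^ e"
    using assms by (intro power_increasing) auto
  moreover have "(2::real) \<le> real p"
    using assms(1) by simp
  ultimately show ?thesis
    by (simp only: power_one_right)
qed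

lemma F_pure_pair_zero:
  assumes "F_pure_ring p TYPE('a::comm_ring_1)"
  shows "F_pure_pair p (f :: 'a) 0"
  unfolding F_pure_pair_def using F_pure_ring_root_splits_one[OF assms] by simp

lemma F_pure_pair_root_splits:
  fixes f :: "'a::comm_ring_1"
  assumes "F_pure_pair p f lam" and "1 \<le> e" and "real N \<le> (real p ^ e - 1) * lam"
  shows "root_splits p e (f ^ N)"
proof -
  have "N \<le> nat \<lfloor>(real p ^ e - 1) * lam\<rfloor>"
    using assms(3) by (simp add: le_nat_floor)
  then show ?thesis
    using assms(1,2) root_splits_power_mono unfolding F_pure_pair_def by blast
qed

lemma F_pure_pair_le_one:
  fixes f :: "'a::comm_ring_1"
  assumes "p \<ge> 2" and "\<not> f dvd 1" and "F_pure_pair p f lam"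
  shows "lam \<le> 1"
proof (rule ccontr)
  assume "\<not> lam \<le> 1"
  then have lam: "lam > 1"
    by simp
  obtain n where "lam / (lam - 1) < real p ^ n"
    using real_arch_pow[of "real p"] assms(1) by force
  then have "lam < real p ^ n * (lam - 1)"
    using lam by (simp add: field_simps)
  also have "\<dots> \<le> real p ^ Suc n * (lam - 1)"
    using lam assms(1) by (intro mult_right_mono) simp_all
  finally have "real (p ^ Suc n) \<le> (real p ^ Suc n - 1) * lam"
    by (simp add: algebra_simps)
  then have "root_splits p (Suc n) (f ^ p ^ Suc n)"
    using F_pure_pair_root_splits[OF assms(3)] by simp
  then show False
    using not_root_splits_power[OF assms(2)] by blast
qed

text \<open>For large \<open>n\<close> the exponent \<open>\<lfloor>(p^(e+n) - 1) \<mu>\<rfloor>\<close> reaches \<open>C p^n\<close>, and Frobenius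
  descends from level \<open>e + n\<close> to level \<open>e\<close>.\<close>
lemma root_splits_of_F_pure_pair:
  fixes f :: "'a::comm_ring_1"
  assumes "prime p" and "CHAR('a) = p" and "F_pure_pair p f mu"
    and "1 \<le> e" and "real C / real p ^ e < mu"
  shows "root_splits p e (f ^ C)"
proof -
  define q where "q = real p ^ e"
  have p: "p \<ge> 2"
    using assms(1) prime_ge_2_nat by blast
  have q: "q \<ge> 2"
    unfolding q_def using p assms(4) by (rule two_le_real_power)
  have "real C < mu * q"
    using assms(5) p unfolding q_def by (simp add: divide_less_eq)
  then have gap: "0 < q * mu - real C"
    by (simp add: mult.commute)
  obtain n where "mu / (q * mu - real C) < real p ^ n"
    using real_arch_pow[of "real p"] p by force
  then have "mu < real p ^ n * (q * mu - real C)"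
    using gap by (simp add: field_simps)
  then have "real (C * p ^ n) \<le> (real p ^ (e + n) - 1) * mu"
    unfolding q_def by (simp add: power_add algebra_simps)
  then have "root_splits p (e + n) (f ^ (C * p ^ n))"
    using F_pure_pair_root_splits[OF assms(3)] assms(4) by simp
  then show ?thesis
    using root_splits_power_frobenius[OF assms(1,2)] by blast
qed

text \<open>With \<open>q = p^e\<close>, the power \<open>f^(C (q^k - 1) / (q - 1))\<close> splits at level \<open>k e\<close>, and
  Frobenius descends to level \<open>k\<close>.\<close>
lemma F_pure_pair_of_root_splits:
  fixes f :: "'a::comm_ring_1"
  assumes "prime p" and "CHAR('a) = p" and "F_pure_ring p TYPE('a)"
    and "1 \<le> e" and "root_splits p e (f ^ C)"
  shows "F_pure_pair p f (real C / (real p ^ e - 1))"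
  unfolding F_pure_pair_def
proof (intro allI impI)
  fix k :: nat
  assume k: "1 \<le> k"
  define q where "q = real p ^ e"
  define nu where "nu = real C / (q - 1)"
  define G where "G = (\<Sum>i<k. (p ^ e) ^ i)"
  define d where "d = k * e - k"
  have p: "p \<ge> 2"
    using assms(1) prime_ge_2_nat by blast
  have q: "q \<ge> 2"
    unfolding q_def using p assms(4) by (rule two_le_real_power)
  have ked: "k * e = k + d"
    unfolding d_def using k assms(4) by (simp add: mult_le_mono)
  have "real G * (q - 1) = q ^ k - 1"
    using power_diff_1_eq[of q k] unfolding G_def q_def by (simp add: mult.commute)
  moreover have "q ^ k = real p ^ (k + d)"
    unfolding q_def ked[symmetric] by (simp add: power_mult mult.commute)
  ultimately have "real G = (real p ^ (k + d) - 1) / (q - 1)"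
    using q by (simp add: field_simps)
  then have CG: "real (C * G) = (real p ^ (k + d) - 1) * nu"
    unfolding nu_def by simp
  define M where "M = nat \<lfloor>(real p ^ k - 1) * nu\<rfloor>"
  have "nu \<ge> 0" and "real p ^ k \<ge> 1"
    unfolding nu_def using p q by simp_all
  then have "real M * real p ^ d \<le> (real p ^ k - 1) * nu * real p ^ d"
    unfolding M_def by (intro mult_right_mono) simp_all
  also have "\<dots> = (real p ^ (k + d) - real p ^ d) * nu"
    by (simp add: power_add algebra_simps)
  also have "\<dots> \<le> real (C * G)"
    unfolding CG using \<open>nu \<ge> 0\<close> p by (intro mult_right_mono) simp_all
  finally have "M * p ^ d \<le> C * G"
    by (simp flip: of_nat_power of_nat_mult)
  moreover have "root_splits p (k + d) (f ^ (C * G))"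
    using root_splits_power_geometric[OF assms(3,5), of k] unfolding G_def ked .
  ultimately show "root_splits p k (f ^ nat \<lfloor>(real p ^ k - 1) * (real C / (real p ^ e - 1))\<rfloor>)"
    using root_splits_power_frobenius[OF assms(1,2)] unfolding M_def nu_def q_def by blast
qed

lemma fpt_bounds:
  fixes f :: "'a::comm_ring_1"
  assumes "p \<ge> 2" and "F_pure_ring p TYPE('a)" and "\<not> f dvd 1"
  shows fpt_nonneg: "0 \<le> fpt p f"
    and fpt_le_one: "fpt p f \<le> 1"
    and le_fpt: "\<And>lam. 0 \<le> lam \<Longrightarrow> F_pure_pair p f lam \<Longrightarrow> lam \<le> fpt p f"
    and less_fpt_imp_F_pure_pair: "\<And>x. x < fpt p f \<Longrightarrow> \<exists>mu>x. F_pure_pair p f mu"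
proof -
  define S where "S = {lam. lam \<ge> 0 \<and> F_pure_pair p f lam}"
  have fpt: "fpt p f = Sup S"
    unfolding fpt_def S_def ..
  have zero: "0 \<in> S"
    unfolding S_def using F_pure_pair_zero[OF assms(2)] by simp
  have le_one: "lam \<le> 1" if "lam \<in> S" for lam
    using that F_pure_pair_le_one[OF assms(1,3)] unfolding S_def by blast
  then have bdd: "bdd_above S"
    by (rule bdd_aboveI)
  show "0 \<le> fpt p f"
    unfolding fpt using cSup_upper[OF zero bdd] .
  show "fpt p f \<le> 1"
    unfolding fpt using zero le_one by (intro cSup_least) auto
  show "lam \<le> fpt p f" if "0 \<le> lam" "F_pure_pair p f lam" for lam
    unfolding fpt using that by (intro cSup_upper bdd) (simp add: S_def)
  show "\<exists>mu>x. F_pure_pair p f mu" if "x < fpt p f" for x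
    using that less_cSup_iff[OF _ bdd, of x] zero unfolding fpt S_def by blast
qed

theorem mainTheorem4:
  fixes p e :: nat and f :: "'a::comm_ring_1"
  assumes "prime p" and "CHAR('a) = p" and "F_pure_ring p TYPE('a)"
    and "f \<noteq> 0" and "\<not> f dvd 1" and "e \<ge> 1"
  shows "trunc p (fpt p f) e * (real p ^ e / (real p ^ e - 1)) \<le> fpt p f"
proof (cases "fpt p f = 0")
  case True
  then show ?thesis
    by (simp add: trunc_def)
next
  case False
  have p: "p \<ge> 2"
    using assms(1) prime_ge_2_nat by blast
  define C where "C = nat (\<lceil>fpt p f * real p ^ e\<rceil> - 1)"
  have pos: "0 < fpt p f"
    using False fpt_nonneg[OF p assms(3,5)] by simp
  then have trunc: "trunc p (fpt p f) e = real C / real p ^ e"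
    using trunc_eq_ceiling[OF p pos fpt_le_one[OF p assms(3,5)]] p unfolding C_def
    by (simp add: le_ceiling_iff)
  have "real C / real p ^ e < fpt p f"
    unfolding C_def using p pos by (simp add: field_simps le_ceiling_iff) linarith
  then obtain mu where "F_pure_pair p f mu" and "real C / real p ^ e < mu"
    using less_fpt_imp_F_pure_pair[OF p assms(3,5)] by blast
  then have "root_splits p e (f ^ C)"
    using root_splits_of_F_pure_pair[OF assms(1,2)] assms(6) by blast
  then have "F_pure_pair p f (real C / (real p ^ e - 1))"
    using F_pure_pair_of_root_splits[OF assms(1-3,6)] by blast
  then have "real C / (real p ^ e - 1) \<le> fpt p f"
    using le_fpt[OF p assms(3,5)] two_le_real_power[OF p assms(6)] by simp
  then show ?thesis
    unfolding trunc using two_le_real_power[OF p assms(6)] p by (simp add: field_simps)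
qed

end
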